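(* Let $Y$ be a fixed point combinator, and let $A_Y \equiv Y(\lambda z.\, f^\star z z)$ where $f^\star$ is a marked variable not occurring in $Y$. For every $M$ with $A_Y \twoheadrightarrow_\beta M$ there exists a balanced $N$ with $M \twoheadrightarrow_\beta N$.
   Context: Untyped $\lambda$-calculus modulo $\alpha$. A fixed point combinator is a term $Y$ with $Yx=_\beta x(Yx)$ for a variable $x$ not free in $Y$. The variable $f^\star$ marks the displayed occurrence of $f$ in $Y(\lambda z.fzz)$; its free occurrences in reducts of $A_Y$ are the descendants of that occurrence. A reduct $M$ of $A_Y$ is balanced if for every subterm of $M$ of the form $f^\star\, s\, t$ one has $s\equiv t$ (syntactic equality modulo $\alpha$). *)

theory Defs
  imports Main
begin

text \<open>Untyped lambda terms: de Bruijn indices for bound variables, names for free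
variables. Raw de Bruijn terms are alpha-equivalence classes, so HOL equality
is syntactic equality modulo alpha.\<close>

datatype lterm = Bd nat | Fr nat | App lterm lterm | Abs lterm

primrec lift :: "lterm \<Rightarrow> nat \<Rightarrow> lterm" where
  "lift (Bd i) k = (if i < k then Bd i else Bd (Suc i))"
| "lift (Fr x) k = Fr x"
| "lift (App s t) k = App (lift s k) (lift t k)"
| "lift (Abs s) k = Abs (lift s (Suc k))"

primrec subst :: "lterm \<Rightarrow> lterm \<Rightarrow> nat \<Rightarrow> lterm" where
  "subst (Bd i) s k = (if k < i then Bd (i - 1) else if i = k then s else Bd i)"
| "subst (Fr x) s k = Fr x"
| "subst (App t u) s k = App (subst t s k) (subst u s k)"
| "subst (Abs t) s k = Abs (subst t (lift s 0) (Suc k))"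

inductive beta :: "lterm \<Rightarrow> lterm \<Rightarrow> bool" where
  beta_rule: "beta (App (Abs s) t) (subst s t 0)"
| appL: "beta s t \<Longrightarrow> beta (App s u) (App t u)"
| appR: "beta s t \<Longrightarrow> beta (App u s) (App u t)"
| abs: "beta s t \<Longrightarrow> beta (Abs s) (Abs t)"

definition beta_reds :: "lterm \<Rightarrow> lterm \<Rightarrow> bool" where
  "beta_reds = beta\<^sup>*\<^sup>*"

definition beta_eq :: "lterm \<Rightarrow> lterm \<Rightarrow> bool" where
  "beta_eq = equivclp beta"

primrec fv :: "lterm \<Rightarrow> nat set" where
  "fv (Bd i) = {}"
| "fv (Fr x) = {x}"
| "fv (App s t) = fv s \<union> fv t"
| "fv (Abs s) = fv s"

primrec closed_at :: "nat \<Rightarrow> lterm \<Rightarrow> bool" where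
  "closed_at k (Bd i) = (i < k)"
| "closed_at k (Fr x) = True"
| "closed_at k (App s t) = (closed_at k s \<and> closed_at k t)"
| "closed_at k (Abs s) = closed_at (Suc k) s"

definition proper_term :: "lterm \<Rightarrow> bool" where
  "proper_term t = closed_at 0 t"

primrec subterms :: "lterm \<Rightarrow> lterm set" where
  "subterms (Bd i) = {Bd i}"
| "subterms (Fr x) = {Fr x}"
| "subterms (App s t) = insert (App s t) (subterms s \<union> subterms t)"
| "subterms (Abs s) = insert (Abs s) (subterms s)"

definition fixed_point_combinator :: "lterm \<Rightarrow> bool" where
  "fixed_point_combinator Y \<longleftrightarrow> proper_term Y \<and>
     (\<forall>x. x \<notin> fv Y \<longrightarrow> beta_eq (App Y (Fr x)) (App (Fr x) (App Y (Fr x))))"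

definition A_term :: "lterm \<Rightarrow> nat \<Rightarrow> lterm" where
  "A_term Y f = App Y (Abs (App (App (Fr f) (Bd 0)) (Bd 0)))"

definition balanced :: "nat \<Rightarrow> lterm \<Rightarrow> bool" where
  "balanced f M \<longleftrightarrow> (\<forall>s t. App (App (Fr f) s) t \<in> subterms M \<longrightarrow> s = t)"

end

theory Submission
  imports Defs
begin

text \<open>Replace the body f z z of the abstraction in A_Y by g z for a fresh variable g. Then A_Y is the image
of P = Y (\<lambda>z. g z) under the map rewriting every g u into f u u. In all reducts of P the
variable g occurs only applied to a single argument, and on such terms this map commutes with
complete developments. Every reduct M of A_Y reduces further to some iterated complete
development of A_Y, which is the image of the same development of P; as f does not occur there,
each f-application in the image arises from some g u and is therefore of the form f u u.
The argument works for every Y not containing f.\<close>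

declare beta.intros [intro]

subsection \<open>Lifting and substitution\<close>

lemma lift_lift:
  "i < k + 1 \<Longrightarrow> lift (lift t i) (Suc k) = lift (lift t k) i"
  by (induct t arbitrary: i k) auto

lemma lift_subst [simp]:
  "j < i + 1 \<Longrightarrow> lift (subst t s j) i = subst (lift t (i + 1)) (lift s i) j"
  by (induct t arbitrary: i j s) (simp_all add: diff_Suc lift_lift split: nat.split)

lemma lift_subst_lt:
  "i < j + 1 \<Longrightarrow> lift (subst t s j) i = subst (lift t i) (lift s i) (j + 1)"
  by (induct t arbitrary: i j s) (auto simp: lift_lift)

lemma subst_lift [simp]: "subst (lift t k) s k = t"
  by (induct t arbitrary: k s) simp_all

lemma subst_subst:
  "i < j + 1 \<Longrightarrow> subst (subst t (lift v i) (Suc j)) (subst u v j) i = subst (subst t u i) v j"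
  by (induct t arbitrary: i j u v)
    (simp_all add: diff_Suc lift_lift [symmetric] lift_subst_lt split: nat.split)

lemma fv_lift [simp]: "fv (lift s k) = fv s"
  by (induct s arbitrary: k) auto

lemma fv_subst: "fv (subst s t k) \<subseteq> fv s \<union> fv t"
proof (induct s arbitrary: t k)
  case (Abs s)
  then show ?case using Abs [of "lift t 0" "Suc k"] by simp
next
  case (App s1 s2)
  then have "fv (subst s1 t k) \<subseteq> fv s1 \<union> fv t" "fv (subst s2 t k) \<subseteq> fv s2 \<union> fv t"
    by blast+
  then show ?case by auto
qed auto

lemma finite_fv: "finite (fv t)"
  by (induct t) auto

lemma rtrancl_beta_Abs: "beta\<^sup>*\<^sup>* s s' \<Longrightarrow> beta\<^sup>*\<^sup>* (Abs s) (Abs s')"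
  by (induct set: rtranclp) (blast intro: rtranclp.rtrancl_into_rtrancl)+

lemma rtrancl_beta_AppL: "beta\<^sup>*\<^sup>* s s' \<Longrightarrow> beta\<^sup>*\<^sup>* (App s t) (App s' t)"
  by (induct set: rtranclp) (blast intro: rtranclp.rtrancl_into_rtrancl)+

lemma rtrancl_beta_AppR: "beta\<^sup>*\<^sup>* t t' \<Longrightarrow> beta\<^sup>*\<^sup>* (App s t) (App s t')"
  by (induct set: rtranclp) (blast intro: rtranclp.rtrancl_into_rtrancl)+

lemma rtrancl_beta_App:
  "beta\<^sup>*\<^sup>* s s' \<Longrightarrow> beta\<^sup>*\<^sup>* t t' \<Longrightarrow> beta\<^sup>*\<^sup>* (App s t) (App s' t')"
  by (blast intro: rtrancl_beta_AppL rtrancl_beta_AppR rtranclp_trans)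

lemma rtrancl_beta_Abs_inv: "beta\<^sup>*\<^sup>* (Abs s) u \<Longrightarrow> \<exists>s'. u = Abs s' \<and> beta\<^sup>*\<^sup>* s s'"
proof (induct rule: rtranclp_induct)
  case (step u w)
  then obtain s' where s': "u = Abs s'" "beta\<^sup>*\<^sup>* s s'" by auto
  with step(2) obtain s'' where "w = Abs s''" "beta s' s''" by (auto elim: beta.cases)
  with s' show ?case by (blast intro: rtranclp.rtrancl_into_rtrancl)
qed auto

lemma fv_beta: "beta s t \<Longrightarrow> fv t \<subseteq> fv s"
  by (induct rule: beta.induct) (use fv_subst in fastforce)+

lemma fv_rtrancl_beta: "beta\<^sup>*\<^sup>* s t \<Longrightarrow> fv t \<subseteq> fv s"
  by (induct rule: rtranclp_induct) (auto dest: fv_beta)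

subsection \<open>Parallel reduction and complete developments\<close>

inductive par_beta :: "lterm \<Rightarrow> lterm \<Rightarrow> bool" where
  par_Bd [simp, intro!]: "par_beta (Bd i) (Bd i)"
| par_Fr [simp, intro!]: "par_beta (Fr x) (Fr x)"
| par_Abs [simp, intro!]: "par_beta s s' \<Longrightarrow> par_beta (Abs s) (Abs s')"
| par_App [simp, intro!]: "par_beta s s' \<Longrightarrow> par_beta t t' \<Longrightarrow> par_beta (App s t) (App s' t')"
| par_beta_rule [simp, intro!]:
    "par_beta s s' \<Longrightarrow> par_beta t t' \<Longrightarrow> par_beta (App (Abs s) t) (subst s' t' 0)"

inductive_cases par_beta_cases [elim!]:
  "par_beta (Bd i) t"
  "par_beta (Fr x) t"
  "par_beta (Abs s) t"
  "par_beta (App s t) u"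

lemma par_beta_refl [simp]: "par_beta t t"
  by (induct t) simp_all

lemma beta_imp_par_beta: "beta s t \<Longrightarrow> par_beta s t"
  by (induct rule: beta.induct) auto

lemma par_beta_imp_rtrancl_beta: "par_beta s t \<Longrightarrow> beta\<^sup>*\<^sup>* s t"
proof (induct rule: par_beta.induct)
  case (par_beta_rule s s' t t')
  then have "beta\<^sup>*\<^sup>* (App (Abs s) t) (App (Abs s') t')"
    by (blast intro: rtrancl_beta_App rtrancl_beta_Abs)
  then show ?case by (blast intro: rtranclp.rtrancl_into_rtrancl)
qed (auto intro: rtrancl_beta_App rtrancl_beta_Abs)

lemma par_beta_lift [simp]: "par_beta t t' \<Longrightarrow> par_beta (lift t n) (lift t' n)"
  by (induct t t' arbitrary: n rule: par_beta.induct) auto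

lemma par_beta_subst:
  "par_beta t t' \<Longrightarrow> par_beta s s' \<Longrightarrow> par_beta (subst t s n) (subst t' s' n)"
proof (induct t t' arbitrary: s s' n rule: par_beta.induct)
  case (par_beta_rule a a' b b')
  then have "par_beta (App (Abs (subst a (lift s 0) (Suc n))) (subst b s n))
      (subst (subst a' (lift s' 0) (Suc n)) (subst b' s' n) 0)"
    by auto
  then show ?case using subst_subst [of 0 n a' s' b'] by simp
qed auto

lemma rtrancl_beta_subst:
  assumes "beta\<^sup>*\<^sup>* s s'" and "beta\<^sup>*\<^sup>* t t'"
  shows "beta\<^sup>*\<^sup>* (subst s t k) (subst s' t' k)"
proof -
  have "beta\<^sup>*\<^sup>* (subst s t k) (subst s' t k)"
    using assms(1)
  proof (induct rule: rtranclp_induct)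
    case (step u u')
    then have "par_beta (subst u t k) (subst u' t k)"
      by (simp add: beta_imp_par_beta par_beta_subst)
    with step(3) show ?case by (blast intro: par_beta_imp_rtrancl_beta rtranclp_trans)
  qed simp
  also have "beta\<^sup>*\<^sup>* (subst s' t k) (subst s' t' k)"
    using assms(2)
  proof (induct rule: rtranclp_induct)
    case (step u u')
    then have "par_beta (subst s' u k) (subst s' u' k)"
      by (simp add: beta_imp_par_beta par_beta_subst)
    with step(3) show ?case by (blast intro: par_beta_imp_rtrancl_beta rtranclp_trans)
  qed simp
  finally show ?thesis .
qed

fun cd :: "lterm \<Rightarrow> lterm" where
  "cd (Bd i) = Bd i"
| "cd (Fr x) = Fr x"
| "cd (Abs s) = Abs (cd s)"
| "cd (App (Abs s) t) = subst (cd s) (cd t) 0"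
| "cd (App s t) = App (cd s) (cd t)"

lemma cd_App_not_Abs: "(\<And>u. s \<noteq> Abs u) \<Longrightarrow> cd (App s t) = App (cd s) (cd t)"
  by (cases s) auto

lemma rtrancl_beta_cd_App: "beta\<^sup>*\<^sup>* (App (cd s) (cd t)) (cd (App s t))"
  by (cases s) auto

lemma par_beta_cd: "par_beta s t \<Longrightarrow> par_beta t (cd s)"
proof (induct rule: par_beta.induct)
  case (par_App s s' t t')
  show ?case
  proof (cases "\<exists>a. s = Abs a")
    case True
    then obtain a where "s = Abs a" by blast
    with par_App show ?thesis by auto
  next
    case False
    with par_App show ?thesis by (auto simp: cd_App_not_Abs)
  qed
qed (auto simp: par_beta_subst)

lemma rtrancl_beta_cd: "beta\<^sup>*\<^sup>* t (cd t)"
  by (rule par_beta_imp_rtrancl_beta, rule par_beta_cd, rule par_beta_refl)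

lemma rtrancl_beta_cd_funpow: "beta\<^sup>*\<^sup>* t ((cd ^^ n) t)"
  by (induct n) (auto intro: rtranclp_trans rtrancl_beta_cd)

lemma par_beta_cd_mono: "par_beta s t \<Longrightarrow> beta\<^sup>*\<^sup>* (cd s) (cd t)"
proof (induct rule: par_beta.induct)
  case (par_App s s' t t')
  show ?case
  proof (cases "\<exists>a. s = Abs a")
    case True
    then obtain a a' where a: "s = Abs a" "s' = Abs a'"
      using par_App by blast
    with par_App have "beta\<^sup>*\<^sup>* (cd a) (cd a')"
      by (auto dest: rtrancl_beta_Abs_inv)
    with a par_App show ?thesis by (simp add: rtrancl_beta_subst)
  next
    case False
    then have "cd (App s t) = App (cd s) (cd t)" by (auto simp: cd_App_not_Abs)
    with par_App show ?thesis
      by (metis rtrancl_beta_App rtrancl_beta_cd_App rtranclp_trans)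
  qed
next
  case (par_beta_rule s s' t t')
  then have "beta\<^sup>*\<^sup>* (cd (App (Abs s) t)) (subst (cd s') (cd t') 0)"
    by (simp add: rtrancl_beta_subst)
  moreover have "par_beta (subst (cd s') (cd t') 0) (cd (subst s' t' 0))"
    by (intro par_beta_cd par_beta_subst par_beta_cd par_beta_refl)
  ultimately show ?case by (blast intro: par_beta_imp_rtrancl_beta rtranclp_trans)
qed (auto intro: rtrancl_beta_Abs)

lemma rtrancl_beta_cd_mono: "beta\<^sup>*\<^sup>* s t \<Longrightarrow> beta\<^sup>*\<^sup>* (cd s) (cd t)"
  by (induct rule: rtranclp_induct)
    (auto intro: rtranclp_trans par_beta_cd_mono beta_imp_par_beta)

lemma rtrancl_beta_cofinal_cd: "beta\<^sup>*\<^sup>* t u \<Longrightarrow> \<exists>n. beta\<^sup>*\<^sup>* u ((cd ^^ n) t)"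
proof (induct rule: rtranclp_induct)
  case base
  show ?case by (rule exI [of _ 0]) simp
next
  case (step u w)
  then obtain n where "beta\<^sup>*\<^sup>* u ((cd ^^ n) t)" by blast
  then have "beta\<^sup>*\<^sup>* (cd u) ((cd ^^ Suc n) t)" by (simp add: rtrancl_beta_cd_mono)
  moreover have "beta\<^sup>*\<^sup>* w (cd u)"
    using step(2) by (intro par_beta_imp_rtrancl_beta par_beta_cd beta_imp_par_beta)
  ultimately show ?case by (blast intro: rtranclp_trans)
qed

subsection \<open>Duplicating the argument of a head variable\<close>

primrec applied_only :: "nat \<Rightarrow> lterm \<Rightarrow> bool" where
  "applied_only g (Bd i) = True"
| "applied_only g (Fr x) = (x \<noteq> g)"
| "applied_only g (App s t) = ((s = Fr g \<or> applied_only g s) \<and> applied_only g t)"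
| "applied_only g (Abs s) = applied_only g s"

primrec duplicate_arg :: "nat \<Rightarrow> nat \<Rightarrow> lterm \<Rightarrow> lterm" where
  "duplicate_arg g f (Bd i) = Bd i"
| "duplicate_arg g f (Fr x) = Fr x"
| "duplicate_arg g f (App s t) =
    (if s = Fr g then App (App (Fr f) (duplicate_arg g f t)) (duplicate_arg g f t)
     else App (duplicate_arg g f s) (duplicate_arg g f t))"
| "duplicate_arg g f (Abs s) = Abs (duplicate_arg g f s)"

lemma applied_only_if_not_fv: "g \<notin> fv t \<Longrightarrow> applied_only g t"
  by (induct t) auto

lemma duplicate_arg_if_not_fv: "g \<notin> fv t \<Longrightarrow> duplicate_arg g f t = t"
  by (induct t) auto

lemma lift_eq_Fr [simp]: "lift s k = Fr x \<longleftrightarrow> s = Fr x"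
  by (cases s) auto

lemma applied_only_lift [simp]: "applied_only g (lift t k) = applied_only g t"
  by (induct t arbitrary: k) auto

lemma applied_only_subst:
  "applied_only g s \<Longrightarrow> applied_only g t \<Longrightarrow> applied_only g (subst s t k)"
  by (induct s arbitrary: t k) auto

lemma applied_only_beta: "beta s t \<Longrightarrow> applied_only g s \<Longrightarrow> applied_only g t"
  by (induct rule: beta.induct) (auto intro: applied_only_subst elim: beta.cases)

lemma applied_only_rtrancl_beta:
  "beta\<^sup>*\<^sup>* s t \<Longrightarrow> applied_only g s \<Longrightarrow> applied_only g t"
  by (induct rule: rtranclp_induct) (auto intro: applied_only_beta)

lemma duplicate_arg_lift: "duplicate_arg g f (lift s k) = lift (duplicate_arg g f s) k"
  by (induct s arbitrary: k) auto

text \<open>Substituting a term in which g is not a bare variable creates no new head g.\<close>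
lemma duplicate_arg_subst:
  "applied_only g t \<Longrightarrow>
    duplicate_arg g f (subst s t k) = subst (duplicate_arg g f s) (duplicate_arg g f t) k"
proof (induct s arbitrary: t k)
  case (App s1 s2)
  have "subst s1 t k = Fr g \<Longrightarrow> s1 = Fr g"
    using App.prems by (cases s1) (auto split: if_splits)
  with App show ?case by auto
qed (auto simp: duplicate_arg_lift)

lemma duplicate_arg_eq_Abs: "duplicate_arg g f s = Abs u \<Longrightarrow> \<exists>a. s = Abs a"
  by (cases s) (auto split: if_splits)

lemma duplicate_arg_cd:
  "applied_only g t \<Longrightarrow> duplicate_arg g f (cd t) = cd (duplicate_arg g f t)"
proof (induct t)
  case (App s t)
  have t: "applied_only g t" "applied_only g (cd t)"
    using App.prems applied_only_rtrancl_beta [OF rtrancl_beta_cd] by auto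
  consider a where "s = Abs a" | "s = Fr g" | "\<And>a. s \<noteq> Abs a" "s \<noteq> Fr g"
    by blast
  then show ?case
  proof cases
    case 1
    with App t show ?thesis by (simp add: duplicate_arg_subst)
  next
    case 2
    with App t show ?thesis by simp
  next
    case 3
    then have "applied_only g s" using App.prems by simp
    then have "cd s \<noteq> Fr g"
      using applied_only_rtrancl_beta [OF rtrancl_beta_cd] by fastforce
    moreover have "\<And>u. duplicate_arg g f s \<noteq> Abs u"
      using 3 duplicate_arg_eq_Abs by blast
    ultimately show ?thesis using 3 App t by (simp add: cd_App_not_Abs)
  qed
qed auto

lemma duplicate_arg_cd_funpow:
  "applied_only g t \<Longrightarrow> duplicate_arg g f ((cd ^^ n) t) = (cd ^^ n) (duplicate_arg g f t)"
proof (induct n)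
  case (Suc n)
  have "applied_only g ((cd ^^ n) t)"
    using Suc.prems applied_only_rtrancl_beta [OF rtrancl_beta_cd_funpow] by blast
  with Suc show ?case by (simp add: duplicate_arg_cd)
qed simp

lemma duplicate_arg_eq_App_Fr: "duplicate_arg g f t = App (Fr f) a \<Longrightarrow> f \<in> fv t"
proof (cases t)
  case (App s u)
  moreover assume "duplicate_arg g f t = App (Fr f) a"
  ultimately show ?thesis by (cases s) (auto split: if_splits)
qed (auto split: if_splits)

lemma balanced_duplicate_arg:
  assumes "applied_only g t" and "f \<notin> fv t"
  shows "balanced f (duplicate_arg g f t)"
  unfolding balanced_def
proof (intro allI impI)
  fix s u
  show "App (App (Fr f) s) u \<in> subterms (duplicate_arg g f t) \<Longrightarrow> s = u"
    using assms
  proof (induct t)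
    case (App t1 t2)
    then show ?case
      by (cases "t1 = Fr g") (auto dest: duplicate_arg_eq_App_Fr sym [THEN duplicate_arg_eq_App_Fr])
  qed auto
qed

theorem lemma5p4:
  assumes "fixed_point_combinator Y"
    and "f \<notin> fv Y"
    and "beta_reds (A_term Y f) M"
  shows "\<exists>N. beta_reds M N \<and> balanced f N"
proof -
  obtain g where g: "g \<notin> insert f (fv Y)"
    using ex_new_if_finite [OF infinite_UNIV_nat] finite_fv by blast
  define P where "P = App Y (Abs (App (Fr g) (Bd 0)))"
  have P: "applied_only g P" "f \<notin> fv P"
    using g assms(2) applied_only_if_not_fv by (auto simp: P_def)
  have "Y \<noteq> Fr g" using g by auto
  then have A: "A_term Y f = duplicate_arg g f P"
    using g by (simp add: P_def A_term_def duplicate_arg_if_not_fv)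
  obtain n where n: "beta\<^sup>*\<^sup>* M ((cd ^^ n) (A_term Y f))"
    using rtrancl_beta_cofinal_cd assms(3) unfolding beta_reds_def by blast
  have "beta\<^sup>*\<^sup>* P ((cd ^^ n) P)" by (rule rtrancl_beta_cd_funpow)
  then have "applied_only g ((cd ^^ n) P)" "f \<notin> fv ((cd ^^ n) P)"
    using P applied_only_rtrancl_beta fv_rtrancl_beta by blast+
  then have "balanced f ((cd ^^ n) (A_term Y f))"
    using balanced_duplicate_arg duplicate_arg_cd_funpow [OF P(1)] A by metis
  with n show ?thesis unfolding beta_reds_def by blast
qed

end
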